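(* Let $\mathcal{D}\subset\mathbb{R}^d$ be compact, $0<a,b<\infty$, $c:=a+b$, $p_Z\in\mathcal{P}_Z$, and let $p_X$ satisfy $\inf_{x\in\mathcal{D}}p_X(x)=\nu>0$. Let $\mathcal{B}=\{\phi_j\}_{j=0}^\infty$ be an orthonormal (Schauder) basis of $\mathbf{L}^2(\mathcal{D})$. For $x\in\mathcal{D}$ let $S_{n,m}(x):=\hat f_{n,m}(x)-f_m(x)$. Suppose there exist a non-negative increasing sequence of reals $\{\Lambda_m\}_{m=1}^\infty$, a non-negative increasing sequence of positive integers $\{m(n)\}_{n=1}^\infty$, and constants $C_1,C_2>0$ such that: (1) for almost every $x,y\in\mathcal{D}$ and all $m$, $\left|\sum_{j=0}^{m-1}\phi_j(x)\phi_j^*(y)\frac{1}{p_X(y)}\right|\le C_1\Lambda_m$; (2) for all $f\in\mathcal{F}$, almost every $x\in\mathcal{D}$ and all $m$, $\left|\sum_{j=0}^{m-1}\langle f,\phi_j\rangle\phi_j(x)\right|\le C_2\Lambda_m$; (3) for all $\epsilon>0$, $\sum_{n=1}^\infty\exp\left(\frac{-\epsilon^2 n}{\Lambda_{m(n)}^2}\right)<\infty$. Then for every $f\in\mathcal{F}$ and every $x\in\mathcal{D}$ outside a set of Lebesgue measure zero, $S_n(x):=S_{n,m(n)}(x)\to0$ almost surely as $n\to\infty$.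
   Context: $\mathcal{F}$ is the set of all measurable functions $f:\mathcal{D}\to[-a,+a]$. $p_X$ is a probability density on $\mathcal{D}$ (absolutely continuous w.r.t. Lebesgue measure) whose support is $\mathcal{D}$. $\mathcal{P}_Z$ is the set of all probability distributions on $\mathbb{R}$ with mean zero and support contained in $[-b,+b]$. Given $n$, let $X_1,\dots,X_n$ be i.i.d. with density $p_X$, $Z_1,\dots,Z_n$ i.i.d. with distribution $p_Z$, and $T_1,\dots,T_n$ i.i.d. uniform on $[-c,+c]$, all mutually independent; $Y_i=f(X_i)+Z_i$, and $B_i=+1$ if $Y_i>T_i$, $B_i=-1$ otherwise. Inner product $\langle g,h\rangle=\int_{\mathcal{D}}g h^*\,dx$. The estimator is $\hat\alpha_j:=\frac{c}{n}\sum_{i=1}^n\frac{\phi_j^*(X_i)}{p_X(X_i)}B_i$ and $\hat f_{n,m}:=\sum_{j=0}^{m-1}\hat\alpha_j\phi_j$; the $m$-term approximation is $f_m:=\sum_{j=0}^{m-1}\langle f,\phi_j\rangle\phi_j$. *)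

theory Defs
  imports "HOL-Probability.Probability"
begin

definition sq_int_on :: "'a::euclidean_space set \<Rightarrow> ('a \<Rightarrow> complex) \<Rightarrow> bool" where
  "sq_int_on D g \<longleftrightarrow> g \<in> borel_measurable lborel \<and>
     set_integrable lborel D (\<lambda>x. (cmod (g x))\<^sup>2)"

definition l2_inner :: "'a::euclidean_space set \<Rightarrow> ('a \<Rightarrow> complex) \<Rightarrow> ('a \<Rightarrow> complex) \<Rightarrow> complex" where
  "l2_inner D g h = (LINT x:D|lborel. g x * cnj (h x))"

definition orthonormal_basis_L2 :: "'a::euclidean_space set \<Rightarrow> (nat \<Rightarrow> 'a \<Rightarrow> complex) \<Rightarrow> bool" where
  "orthonormal_basis_L2 D \<phi> \<longleftrightarrow>
     (\<forall>j. sq_int_on D (\<phi> j)) \<and>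
     (\<forall>j k. l2_inner D (\<phi> j) (\<phi> k) = (if j = k then 1 else 0)) \<and>
     (\<forall>g. sq_int_on D g \<longrightarrow>
        (\<lambda>m. LINT x:D|lborel. (cmod (g x - (\<Sum>j<m. l2_inner D g (\<phi> j) * \<phi> j x)))\<^sup>2)
          \<longlonglongrightarrow> 0)"

definition fun_class :: "'a::euclidean_space set \<Rightarrow> real \<Rightarrow> ('a \<Rightarrow> real) set" where
  "fun_class D a = {f. f \<in> borel_measurable borel \<and> (\<forall>x\<in>D. \<bar>f x\<bar> \<le> a)}"

definition coef :: "'a::euclidean_space set \<Rightarrow> ('a \<Rightarrow> real) \<Rightarrow> ('a \<Rightarrow> complex) \<Rightarrow> complex" where
  "coef D f \<psi> = l2_inner D (\<lambda>x. complex_of_real (f x)) \<psi>"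

definition f_approx :: "'a::euclidean_space set \<Rightarrow> (nat \<Rightarrow> 'a \<Rightarrow> complex) \<Rightarrow> ('a \<Rightarrow> real) \<Rightarrow> nat \<Rightarrow> 'a \<Rightarrow> complex" where
  "f_approx D \<phi> f m x = (\<Sum>j<m. coef D f (\<phi> j) * \<phi> j x)"

definition bit :: "('a \<Rightarrow> real) \<Rightarrow> 'a \<Rightarrow> real \<Rightarrow> real \<Rightarrow> real" where
  "bit f x z t = (if f x + z > t then 1 else -1)"

text \<open>Estimated coefficient alpha_j from the first n samples (indices 0..n-1).\<close>
definition alpha_hat :: "real \<Rightarrow> ('a \<Rightarrow> real) \<Rightarrow> (nat \<Rightarrow> 'a \<Rightarrow> complex) \<Rightarrow> ('a \<Rightarrow> real)
     \<Rightarrow> (nat \<Rightarrow> 'w \<Rightarrow> 'a) \<Rightarrow> (nat \<Rightarrow> 'w \<Rightarrow> real) \<Rightarrow> (nat \<Rightarrow> 'w \<Rightarrow> real)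
     \<Rightarrow> nat \<Rightarrow> nat \<Rightarrow> 'w \<Rightarrow> complex" where
  "alpha_hat c pX \<phi> f X Z T n j \<omega> =
     complex_of_real (c / real n) *
       (\<Sum>i<n. cnj (\<phi> j (X i \<omega>)) / complex_of_real (pX (X i \<omega>))
               * complex_of_real (bit f (X i \<omega>) (Z i \<omega>) (T i \<omega>)))"

definition f_hat :: "real \<Rightarrow> ('a \<Rightarrow> real) \<Rightarrow> (nat \<Rightarrow> 'a \<Rightarrow> complex) \<Rightarrow> ('a \<Rightarrow> real)
     \<Rightarrow> (nat \<Rightarrow> 'w \<Rightarrow> 'a) \<Rightarrow> (nat \<Rightarrow> 'w \<Rightarrow> real) \<Rightarrow> (nat \<Rightarrow> 'w \<Rightarrow> real)
     \<Rightarrow> nat \<Rightarrow> nat \<Rightarrow> 'a \<Rightarrow> 'w \<Rightarrow> complex" where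
  "f_hat c pX \<phi> f X Z T n m x \<omega> = (\<Sum>j<m. alpha_hat c pX \<phi> f X Z T n j \<omega> * \<phi> j x)"

end

theory Submission
  imports Defs
begin

text \<open>
  The estimate at x is the empirical mean of the i.i.d. variables c K_m(x, X_i) B_i, where
  K_m(x, y) is the kernel sum of phi_j(x) conj(phi_j(y)) / p_X(y) over j < m. Integrating out the
  uniform dither gives E[B | X = y, Z = z] = (f(y) + z) / c, and Z has mean zero, so every term has
  mean f_m(x). For almost every x, condition (1) bounds the terms by c C_1 Lambda_m, and Hoeffding's
  inequality for real and imaginary parts gives
  P(|S_n(x)| >= eps) <= 4 exp(-eps^2 n / (8 c^2 C_1^2 Lambda_{m(n)}^2)).
  By condition (3) these probabilities are summable, and Borel-Cantelli yields S_n(x) -> 0 almost surely.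
\<close>

lemma borel_measurable_cnj [measurable (raw)]:
  "g \<in> borel_measurable M \<Longrightarrow> (\<lambda>x. cnj (g x)) \<in> borel_measurable M"
  by (rule measurable_compose[OF _ borel_measurable_continuous_onI[OF continuous_on_cnj[OF continuous_on_id]]])

lemma integral_uniform_sign:
  fixes c s :: real
  assumes c: "0 < c" and s: "-c \<le> s" "s \<le> c"
  shows "integral\<^sup>L (uniform_measure lborel {-c..c}) (\<lambda>t. if s > t then 1 else -1 :: real) = s / c"
proof -
  let ?U = "uniform_measure lborel {-c..c}"
  interpret U: prob_space ?U by (rule prob_space_uniform_measure) (use c in auto)
  have sign_eq: "(\<lambda>t. if s > t then 1 else -1 :: real) = (\<lambda>t. 2 * indicator {..<s} t - 1)"
    by (auto simp: indicator_def fun_eq_iff)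
  have "integral\<^sup>L ?U (\<lambda>t. 2 * indicator {..<s} t - 1 :: real) = 2 * U.prob {..<s} - 1"
    by (subst Bochner_Integration.integral_diff)
       (auto intro!: U.integrable_const_bound[where B=1] simp: U.prob_space[simplified])
  also have "U.prob {..<s} = measure lborel ({-c..c} \<inter> {..<s}) / measure lborel {-c..c}"
    by (subst measure_uniform_measure) (use c in auto)
  also have "{-c..c} \<inter> {..<s} = {-c..<s}"
    using s by auto
  finally show ?thesis using c s by (simp add: sign_eq field_simps)
qed

lemma integral_dithered_sign:
  fixes pZ :: "real measure" and b c s :: real
  assumes Z_prob: "prob_space pZ" and Z_sets: "sets pZ = sets borel"
    and Z_supp: "measure pZ {-b..b} = 1" and Z_mean: "integral\<^sup>L pZ (\<lambda>z. z) = 0"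
    and c: "0 < c" and s: "\<bar>s\<bar> + b \<le> c"
  shows "integral\<^sup>L (pZ \<Otimes>\<^sub>M uniform_measure lborel {-c..c})
           (\<lambda>w. if s + fst w > snd w then 1 else -1 :: real) = s / c"
proof -
  let ?U = "uniform_measure lborel {-c..c}"
  interpret Z: prob_space pZ by (fact Z_prob)
  interpret U: prob_space ?U by (rule prob_space_uniform_measure) (use c in auto)
  interpret ZU: pair_prob_space pZ ?U ..
  have [measurable]: "(\<lambda>z. z) \<in> borel_measurable pZ"
    by (simp add: measurable_cong_sets[OF Z_sets refl])
  have Z_bounded: "AE z in pZ. z \<in> {-b..b}"
    using Z_supp Z_sets by (intro Z.AE_prob_1) auto
  have "integrable (pZ \<Otimes>\<^sub>M ?U) (\<lambda>w. if s + fst w > snd w then 1 else -1 :: real)"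
    by (rule ZU.integrable_const_bound[where B=1])
       (auto simp: measurable_cong_sets[OF sets_pair_measure_cong[OF Z_sets sets_uniform_measure] refl])
  then have "integral\<^sup>L (pZ \<Otimes>\<^sub>M ?U) (\<lambda>w. if s + fst w > snd w then 1 else -1 :: real)
      = (\<integral>z. (\<integral>t. (if s + z > t then 1 else -1 :: real) \<partial>?U) \<partial>pZ)"
    by (subst ZU.integral_fst'[symmetric]) simp_all
  also have "\<dots> = (\<integral>z. (s + z) / c \<partial>pZ)"
  proof (rule integral_cong_AE)
    show "AE z in pZ. (\<integral>t. (if s + z > t then 1 else -1 :: real) \<partial>?U) = (s + z) / c"
      using Z_bounded by eventually_elim (rule integral_uniform_sign, use c s in auto)
  qed (simp_all add: measurable_cong_sets[OF Z_sets refl])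
  also have "\<dots> = (s + integral\<^sup>L pZ (\<lambda>z. z)) / c"
  proof -
    have "integrable pZ (\<lambda>z. z)"
      by (rule Z.integrable_const_bound[where B=b]) (use Z_bounded in auto)
    then show ?thesis
      by (simp add: Z.prob_space[simplified] add_divide_distrib)
  qed
  finally show ?thesis
    using Z_mean by simp
qed

lemma (in prob_space) Hoeffding_bounded_linear_image:
  fixes W :: "nat \<Rightarrow> 'a \<Rightarrow> 'b::{banach, second_countable_topology}" and h :: "'b \<Rightarrow> real"
  assumes indep: "indep_vars (\<lambda>_. borel) W {..<n}"
    and bounded: "\<And>i. i < n \<Longrightarrow> AE \<omega> in M. norm (W i \<omega>) \<le> B"
    and mean: "\<And>i. i < n \<Longrightarrow> expectation (W i) = \<mu>"
    and h: "bounded_linear h" "\<And>z. \<bar>h z\<bar> \<le> norm z"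
    and n: "0 < n" and B: "0 < B" and t: "0 \<le> t"
  shows "prob {\<omega> \<in> space M. t \<le> \<bar>(\<Sum>i<n. h (W i \<omega>)) - real n * h \<mu>\<bar>}
           \<le> 2 * exp (- t\<^sup>2 / (2 * real n * B\<^sup>2))"
proof -
  have [measurable]: "h \<in> borel_measurable borel"
    by (intro borel_measurable_continuous_onI linear_continuous_on h)
  have W_meas [measurable]: "W i \<in> borel_measurable M" if "i < n" for i
    using indep that unfolding indep_vars_def by auto
  have h_bounded: "AE \<omega> in M. h (W i \<omega>) \<in> {-B..B}" if "i < n" for i
    using bounded[OF that]
  proof eventually_elim
    case (elim \<omega>)
    then show ?case
      using h(2)[of "W i \<omega>"] by (auto simp: abs_le_iff)
  qed
  have "expectation (\<lambda>\<omega>. h (W i \<omega>)) = h \<mu>" if "i < n" for i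
  proof -
    have "integrable M (W i)"
      by (rule integrable_const_bound[OF bounded[OF that]]) (simp add: that)
    then show ?thesis
      using mean[OF that] by (simp add: integral_bounded_linear[OF h(1)])
  qed
  then have sum_mean: "real n * h \<mu> = (\<Sum>i<n. expectation (\<lambda>\<omega>. h (W i \<omega>)))"
    by simp
  interpret Hoeffding_ineq M "{..<n}" "\<lambda>i \<omega>. h (W i \<omega>)" "\<lambda>_. -B" "\<lambda>_. B" "real n * h \<mu>"
  proof unfold_locales
    show "indep_vars (\<lambda>_. borel) (\<lambda>i \<omega>. h (W i \<omega>)) {..<n}"
      by (rule indep_vars_compose2[OF indep]) measurable
  qed (use h_bounded sum_mean in auto)
  have "prob {\<omega> \<in> space M. t \<le> \<bar>(\<Sum>i<n. h (W i \<omega>)) - real n * h \<mu>\<bar>}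
      \<le> 2 * exp (-2 * t\<^sup>2 / (\<Sum>i<n. (B - -B)\<^sup>2))"
    by (rule Hoeffding_ineq_abs_ge[OF t]) (use n B in simp)
  also have "-2 * t\<^sup>2 / (\<Sum>i<n. (B - -B)\<^sup>2) = - t\<^sup>2 / (2 * real n * B\<^sup>2)"
    by (simp add: power2_eq_square)
  finally show ?thesis .
qed

lemma (in prob_space) Hoeffding_complex_mean:
  fixes W :: "nat \<Rightarrow> 'a \<Rightarrow> complex"
  assumes indep: "indep_vars (\<lambda>_. borel) W {..<n}"
    and bounded: "\<And>i. i < n \<Longrightarrow> AE \<omega> in M. cmod (W i \<omega>) \<le> B"
    and mean: "\<And>i. i < n \<Longrightarrow> expectation (W i) = \<mu>"
    and n: "0 < n" and \<epsilon>: "0 \<le> \<epsilon>" and B: "0 \<le> B"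
  shows "prob {\<omega> \<in> space M. \<epsilon> \<le> cmod ((\<Sum>i<n. W i \<omega>) / of_nat n - \<mu>)}
           \<le> 4 * exp (- (\<epsilon>\<^sup>2 * real n) / (8 * B\<^sup>2))"
proof (cases "B = 0")
  case True
  \<comment> \<open>Then the right-hand side is \<open>4 * exp 0\<close>, since division by zero yields zero.\<close>
  then show ?thesis
    by (simp add: order_trans[OF prob_le_1])
next
  case False
  with B have B: "0 < B" by simp
  have [measurable]: "W i \<in> borel_measurable M" if "i < n" for i
    using indep that unfolding indep_vars_def by auto
  define t where "t = real n * \<epsilon> / 2"
  define E where "E h = {\<omega> \<in> space M. t \<le> \<bar>(\<Sum>i<n. h (W i \<omega>)) - real n * h \<mu>\<bar>}" for h
  have E_sets: "E Re \<in> sets M" "E Im \<in> sets M"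
    unfolding E_def by measurable
  have "{\<omega> \<in> space M. \<epsilon> \<le> cmod ((\<Sum>i<n. W i \<omega>) / of_nat n - \<mu>)} \<subseteq> E Re \<union> E Im"
  proof safe
    fix \<omega> assume "\<omega> \<in> space M" "\<epsilon> \<le> cmod ((\<Sum>i<n. W i \<omega>) / of_nat n - \<mu>)" "\<omega> \<notin> E Im"
    moreover have "(\<Sum>i<n. W i \<omega>) / of_nat n - \<mu> = ((\<Sum>i<n. W i \<omega>) - of_nat n * \<mu>) / of_nat n"
      using n by (simp add: field_simps)
    ultimately show "\<omega> \<in> E Re"
      using cmod_le[of "(\<Sum>i<n. W i \<omega>) - of_nat n * \<mu>"] n
      by (auto simp: E_def t_def norm_divide Re_sum Im_sum field_simps)
  qed
  then have "prob {\<omega> \<in> space M. \<epsilon> \<le> cmod ((\<Sum>i<n. W i \<omega>) / of_nat n - \<mu>)} \<le> prob (E Re) + prob (E Im)"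
    using E_sets by (meson finite_measure_mono measure_Un_le order_trans sets.Un)
  also have "\<dots> \<le> 2 * exp (- t\<^sup>2 / (2 * real n * B\<^sup>2)) + 2 * exp (- t\<^sup>2 / (2 * real n * B\<^sup>2))"
    unfolding E_def using n B \<epsilon>
    by (intro add_mono Hoeffding_bounded_linear_image[OF indep bounded mean]
          bounded_linear_Re bounded_linear_Im abs_Re_le_cmod abs_Im_le_cmod) (simp_all add: t_def)
  also have "- t\<^sup>2 / (2 * real n * B\<^sup>2) = - (\<epsilon>\<^sup>2 * real n) / (8 * B\<^sup>2)"
    using n by (simp add: t_def power2_eq_square field_simps)
  finally show ?thesis by simp
qed

lemma (in prob_space) AE_tendsto_zero_if_summable_tail_prob:
  fixes S :: "nat \<Rightarrow> 'a \<Rightarrow> 'b::real_normed_vector"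
  assumes [measurable]: "\<And>n. S n \<in> borel_measurable M"
    and tail: "\<And>\<epsilon>. 0 < \<epsilon> \<Longrightarrow> summable (\<lambda>n. prob {\<omega> \<in> space M. \<epsilon> \<le> norm (S n \<omega>)})"
  shows "AE \<omega> in M. (\<lambda>n. S n \<omega>) \<longlonglongrightarrow> 0"
proof -
  have "AE \<omega> in M. eventually (\<lambda>n. norm (S n \<omega>) < \<epsilon>) sequentially" if "0 < \<epsilon>" for \<epsilon>
  proof -
    have "AE \<omega> in M. eventually (\<lambda>n. \<omega> \<in> space M - {\<omega> \<in> space M. \<epsilon> \<le> norm (S n \<omega>)}) sequentially"
      by (rule borel_cantelli_AE1) (simp_all add: tail[OF that] emeasure_eq_measure)
    then show ?thesis
      by eventually_elim (auto elim!: eventually_mono)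
  qed
  then have "AE \<omega> in M. \<forall>k. eventually (\<lambda>n. norm (S n \<omega>) < 1 / Suc k) sequentially"
    by (subst AE_all_countable) simp
  then show ?thesis
  proof eventually_elim
    case (elim \<omega>)
    show ?case
    proof (rule tendstoI)
      fix r :: real assume "0 < r"
      then obtain k where "1 / Suc k < r"
        using nat_approx_posE by blast
      then show "eventually (\<lambda>n. dist (S n \<omega>) 0 < r) sequentially"
        using elim[rule_format, of k] by (auto elim!: eventually_mono)
    qed
  qed
qed

lemma prob_space_density_set_integral:
  fixes p :: "'a::euclidean_space \<Rightarrow> real"
  assumes p_meas: "p \<in> borel_measurable borel" and p_nonneg: "\<And>x. 0 \<le> p x"
    and p_out: "\<And>x. x \<notin> D \<Longrightarrow> p x = 0" and p_int: "(LINT x:D|lborel. p x) = 1"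
  shows "prob_space (density lborel (\<lambda>x. ennreal (p x)))"
proof
  have "(\<lambda>x. indicator D x *\<^sub>R p x) = p"
    using p_out by (auto simp: fun_eq_iff indicator_def)
  then have p_int': "integral\<^sup>L lborel p = 1"
    using p_int by (simp add: set_lebesgue_integral_def)
  then have "integrable lborel p"
    using not_integrable_integral_eq by fastforce
  then have "(\<integral>\<^sup>+x. ennreal (p x) \<partial>lborel) = 1"
    using p_int' p_nonneg by (subst nn_integral_eq_integral) auto
  then show "emeasure (density lborel (\<lambda>x. ennreal (p x))) (space (density lborel (\<lambda>x. ennreal (p x)))) = 1"
    using p_meas by (simp add: emeasure_density)
qed

lemma sq_int_on_set_integrable_norm:
  fixes g :: "'a::euclidean_space \<Rightarrow> complex"
  assumes g: "sq_int_on D g" and D: "D \<in> sets lborel" "emeasure lborel D < \<infinity>"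
  shows "set_integrable lborel D (\<lambda>y. cmod (g y))"
  unfolding set_integrable_def
proof (rule Bochner_Integration.integrable_bound)
  have [measurable]: "g \<in> borel_measurable borel"
    using g unfolding sq_int_on_def by simp
  have "integrable lborel (\<lambda>y. indicator D y *\<^sub>R (cmod (g y))\<^sup>2)"
    using g unfolding sq_int_on_def set_integrable_def by simp
  moreover have "integrable lborel (\<lambda>y. indicator D y :: real)"
    using D by (intro integrable_real_indicator) auto
  ultimately show "integrable lborel (\<lambda>y. indicator D y + indicator D y *\<^sub>R (cmod (g y))\<^sup>2 :: real)"
    by (rule Bochner_Integration.integrable_add[rotated])
  show "(\<lambda>y. indicator D y *\<^sub>R cmod (g y)) \<in> borel_measurable lborel"
    using D(1) by measurable
  have "cmod (g y) \<le> 1 + (cmod (g y))\<^sup>2" for y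
    by (smt (verit) power2_eq_square mult_le_cancel_left1 zero_le_square)
  then show "AE y in lborel. norm (indicator D y *\<^sub>R cmod (g y))
               \<le> norm (indicator D y + indicator D y *\<^sub>R (cmod (g y))\<^sup>2 :: real)"
    by (auto simp: indicator_def)
qed

lemma AE_lborel_pair_iterated:
  fixes P :: "'a::euclidean_space \<Rightarrow> 'b::euclidean_space \<Rightarrow> bool"
  assumes "AE xy in lborel. P (fst xy) (snd xy)"
  shows "AE x in lborel. AE y in lborel. P x y"
proof -
  have "pair_sigma_finite (lborel :: 'a measure) (lborel :: 'b measure)"
    by (intro pair_sigma_finite.intro sigma_finite_lborel)
  moreover have "AE xy in lborel \<Otimes>\<^sub>M lborel. P (fst xy) (snd xy)"
    using assms by (simp only: lborel_prod)
  ultimately have "AE x in lborel. AE y in lborel. P (fst (x, y)) (snd (x, y))"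
    by (rule pair_sigma_finite.AE_pair)
  then show ?thesis
    by simp
qed

definition basis_kernel :: "(nat \<Rightarrow> 'a \<Rightarrow> complex) \<Rightarrow> ('a \<Rightarrow> real) \<Rightarrow> nat \<Rightarrow> 'a \<Rightarrow> 'a \<Rightarrow> complex"
  where "basis_kernel \<phi> pX m x y = (\<Sum>j<m. \<phi> j x * cnj (\<phi> j y) / complex_of_real (pX y))"

lemma integral_density_basis_kernel:
  fixes \<phi> :: "nat \<Rightarrow> 'a::euclidean_space \<Rightarrow> complex"
  assumes D: "D \<in> sets lborel" "emeasure lborel D < \<infinity>"
    and pX_meas [measurable]: "pX \<in> borel_measurable borel" and pX_nonneg: "\<And>y. 0 \<le> pX y"
    and pX_out: "\<And>y. y \<notin> D \<Longrightarrow> pX y = 0" and pX_pos: "\<And>y. y \<in> D \<Longrightarrow> 0 < pX y"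
    and sq: "\<And>j. sq_int_on D (\<phi> j)" and f: "f \<in> fun_class D a"
  shows "(\<integral>y. basis_kernel \<phi> pX m x y * complex_of_real (f y) \<partial>density lborel (\<lambda>y. ennreal (pX y)))
           = f_approx D \<phi> f m x"
proof -
  have [measurable]: "f \<in> borel_measurable borel" and f_bound: "\<And>y. y \<in> D \<Longrightarrow> \<bar>f y\<bar> \<le> a"
    using f by (auto simp: fun_class_def)
  have [measurable]: "\<phi> j \<in> borel_measurable borel" for j
    using sq[of j] unfolding sq_int_on_def by simp
  have [measurable]: "D \<in> sets borel"
    using D by simp
  let ?F = "\<lambda>j y. indicator D y *\<^sub>R (complex_of_real (f y) * cnj (\<phi> j y))"
  have F_int: "integrable lborel (?F j)" for j
  proof (rule Bochner_Integration.integrable_bound)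
    show "integrable lborel (\<lambda>y. a * (indicator D y *\<^sub>R cmod (\<phi> j y)))"
      using sq_int_on_set_integrable_norm[OF sq D] unfolding set_integrable_def
      by (rule integrable_mult_right)
    show "AE y in lborel. norm (?F j y) \<le> norm (a * (indicator D y *\<^sub>R cmod (\<phi> j y)))"
      using f_bound by (intro AE_I2) (force simp: indicator_def norm_mult abs_mult intro!: mult_right_mono)
  qed measurable
  have pX_kernel: "pX y *\<^sub>R (basis_kernel \<phi> pX m x y * complex_of_real (f y)) = (\<Sum>j<m. \<phi> j x * ?F j y)" for y
    using pX_pos[of y] pX_out[of y]
    by (cases "y \<in> D") (simp_all add: basis_kernel_def scaleR_conv_of_real sum_distrib_left sum_distrib_right field_simps)
  have "(\<integral>y. basis_kernel \<phi> pX m x y * complex_of_real (f y) \<partial>density lborel (\<lambda>y. ennreal (pX y)))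
      = (\<integral>y. pX y *\<^sub>R (basis_kernel \<phi> pX m x y * complex_of_real (f y)) \<partial>lborel)"
    unfolding basis_kernel_def
  proof (rule integral_density)
    show "AE y in lborel. 0 \<le> pX y"
      using pX_nonneg by simp
  qed measurable
  also have "\<dots> = (\<integral>y. (\<Sum>j<m. \<phi> j x * ?F j y) \<partial>lborel)"
    by (simp only: pX_kernel)
  also have "\<dots> = (\<Sum>j<m. \<phi> j x * integral\<^sup>L lborel (?F j))"
    by (subst Bochner_Integration.integral_sum) (simp_all only: integral_mult_right_zero integrable_mult_right F_int)
  also have "\<dots> = f_approx D \<phi> f m x"
    by (simp add: f_approx_def coef_def l2_inner_def set_lebesgue_integral_def mult.commute)
  finally show ?thesis .
qed

definition kernel_sample :: "real \<Rightarrow> ('a \<Rightarrow> real) \<Rightarrow> (nat \<Rightarrow> 'a \<Rightarrow> complex) \<Rightarrow> ('a \<Rightarrow> real) \<Rightarrow> nat \<Rightarrow> 'a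
     \<Rightarrow> 'a \<times> real \<times> real \<Rightarrow> complex"
  where "kernel_sample c pX \<phi> f m x v = complex_of_real c * basis_kernel \<phi> pX m x (fst v)
           * complex_of_real (bit f (fst v) (fst (snd v)) (snd (snd v)))"

lemma f_hat_eq_sample_mean:
  "f_hat c pX \<phi> f X Z T n m x \<omega>
     = (\<Sum>i<n. kernel_sample c pX \<phi> f m x (X i \<omega>, Z i \<omega>, T i \<omega>)) / of_nat n"
  unfolding f_hat_def alpha_hat_def kernel_sample_def basis_kernel_def
  by (simp add: sum_distrib_left sum_distrib_right sum_divide_distrib)
     (subst sum.swap, simp add: field_simps)

locale dithered_sampling =
  fixes D :: "'a::euclidean_space set"
    and a b c :: real
    and pX :: "'a \<Rightarrow> real"
    and pZ :: "real measure"
    and \<phi> :: "nat \<Rightarrow> 'a \<Rightarrow> complex"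
    and M :: "'w measure"
    and X :: "nat \<Rightarrow> 'w \<Rightarrow> 'a"
    and Z T :: "nat \<Rightarrow> 'w \<Rightarrow> real"
  assumes D_compact: "compact D"
    and ab: "0 < a" "0 < b"
    and c_def: "c = a + b"
    and pZ_prob: "prob_space pZ"
    and pZ_sets: "sets pZ = sets borel"
    and pZ_supp: "measure pZ {-b..b} = 1"
    and pZ_mean: "integral\<^sup>L pZ (\<lambda>z. z) = 0"
    and pX_meas [measurable]: "pX \<in> borel_measurable borel"
    and pX_nonneg: "\<And>y. 0 \<le> pX y"
    and pX_out: "\<And>y. y \<notin> D \<Longrightarrow> pX y = 0"
    and pX_int: "(LINT y:D|lborel. pX y) = 1"
    and pX_pos: "\<And>y. y \<in> D \<Longrightarrow> 0 < pX y"
    and basis_sq_int: "\<And>j. sq_int_on D (\<phi> j)"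
    and M_prob: "prob_space M"
    and indep: "prob_space.indep_vars M (\<lambda>_. borel) (\<lambda>i \<omega>. (X i \<omega>, Z i \<omega>, T i \<omega>)) UNIV"
    and distrib: "\<And>i. distr M borel (\<lambda>\<omega>. (X i \<omega>, Z i \<omega>, T i \<omega>)) =
                   density lborel (\<lambda>y. ennreal (pX y)) \<Otimes>\<^sub>M (pZ \<Otimes>\<^sub>M uniform_measure lborel {-c..c})"
begin

abbreviation "PX \<equiv> density lborel (\<lambda>y. ennreal (pX y))"
abbreviation "PZT \<equiv> pZ \<Otimes>\<^sub>M uniform_measure lborel {-c..c}"

lemma c_pos: "0 < c"
  using ab c_def by simp

sublocale M: prob_space M
  by (fact M_prob)

sublocale PX: prob_space PX
  by (rule prob_space_density_set_integral[OF pX_meas pX_nonneg pX_out pX_int])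

sublocale PZT: pair_prob_space pZ "uniform_measure lborel {-c..c}"
  using pZ_prob c_pos
  by (intro pair_prob_space.intro pair_sigma_finite.intro prob_space_imp_sigma_finite prob_space_uniform_measure)
     auto

sublocale sample: pair_prob_space PX PZT
  by (intro pair_prob_space.intro pair_sigma_finite.intro prob_space_imp_sigma_finite
        PX.prob_space_axioms PZT.prob_space_axioms)

lemma domain_sets: "D \<in> sets lborel"
  using D_compact by (simp add: compact_imp_closed)

lemma domain_finite: "emeasure lborel D < \<infinity>"
  using emeasure_bounded_finite[OF compact_imp_bounded[OF D_compact]] by simp

lemma basis_measurable [measurable]: "\<phi> j \<in> borel_measurable borel"
  using basis_sq_int[of j] unfolding sq_int_on_def by simp

lemma sets_sample_law: "sets (PX \<Otimes>\<^sub>M PZT) = sets borel"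
proof -
  have "sets (PX \<Otimes>\<^sub>M PZT) = sets (borel \<Otimes>\<^sub>M (borel \<Otimes>\<^sub>M borel))"
    by (intro sets_pair_measure_cong sets_density pZ_sets sets_uniform_measure) simp_all
  then show ?thesis
    by (simp only: borel_prod)
qed

lemma sample_measurable [measurable]: "(\<lambda>\<omega>. (X i \<omega>, Z i \<omega>, T i \<omega>)) \<in> borel_measurable M"
  using indep unfolding M.indep_vars_def by auto

lemma kernel_sample_measurable:
  assumes "f \<in> fun_class D a"
  shows "kernel_sample c pX \<phi> f m x \<in> borel_measurable borel"
proof -
  have [measurable]: "f \<in> borel_measurable borel"
    using assms by (simp add: fun_class_def)
  have "(\<lambda>v::'a \<times> real \<times> real. kernel_sample c pX \<phi> f m x v) \<in> borel_measurable (borel \<Otimes>\<^sub>M (borel \<Otimes>\<^sub>M borel))"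
    unfolding kernel_sample_def basis_kernel_def bit_def by measurable
  then show ?thesis
    by (simp only: borel_prod)
qed

lemma kernel_sample_measurable_sample_law:
  assumes "f \<in> fun_class D a"
  shows "kernel_sample c pX \<phi> f m x \<in> borel_measurable (PX \<Otimes>\<^sub>M PZT)"
  using kernel_sample_measurable[OF assms] by (simp add: measurable_cong_sets[OF sets_sample_law refl])

lemma AE_PX_in_domain: "AE y in PX. y \<in> D"
proof -
  have "AE y in lborel. 0 < ennreal (pX y) \<longrightarrow> y \<in> D"
    using pX_out by (intro AE_I2) (metis ennreal_0 less_irrefl)
  then show ?thesis
    by (subst AE_density) simp_all
qed

context
  fixes f x m B
  assumes f: "f \<in> fun_class D a"
    and kernel_bound: "AE y in lborel. y \<in> D \<longrightarrow> cmod (basis_kernel \<phi> pX m x y) \<le> B"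
begin

lemma AE_kernel_sample_bound: "AE v in PX \<Otimes>\<^sub>M PZT. cmod (kernel_sample c pX \<phi> f m x v) \<le> c * B"
proof (rule sample.AE_pair_measure)
  show "{v \<in> space (PX \<Otimes>\<^sub>M PZT). cmod (kernel_sample c pX \<phi> f m x v) \<le> c * B} \<in> sets (PX \<Otimes>\<^sub>M PZT)"
    using kernel_sample_measurable_sample_law[OF f] by measurable
  note AE_PX_in_domain
  moreover have "AE y in PX. y \<in> D \<longrightarrow> cmod (basis_kernel \<phi> pX m x y) \<le> B"
    using kernel_bound by (subst AE_density) (auto elim!: eventually_mono)
  ultimately show "AE y in PX. AE w in PZT. cmod (kernel_sample c pX \<phi> f m x (y, w)) \<le> c * B"
    by eventually_elim (use c_pos in \<open>simp add: kernel_sample_def bit_def norm_mult\<close>)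
qed

lemma integral_kernel_sample: "integral\<^sup>L (PX \<Otimes>\<^sub>M PZT) (kernel_sample c pX \<phi> f m x) = f_approx D \<phi> f m x"
proof -
  have f_bound: "\<And>y. y \<in> D \<Longrightarrow> \<bar>f y\<bar> \<le> a" and [measurable]: "f \<in> borel_measurable borel"
    using f by (auto simp: fun_class_def)
  have int: "integrable (PX \<Otimes>\<^sub>M PZT) (kernel_sample c pX \<phi> f m x)"
    by (rule sample.integrable_const_bound[OF AE_kernel_sample_bound kernel_sample_measurable_sample_law[OF f]])
  have "integral\<^sup>L (PX \<Otimes>\<^sub>M PZT) (kernel_sample c pX \<phi> f m x)
      = (\<integral>y. (\<integral>w. kernel_sample c pX \<phi> f m x (y, w) \<partial>PZT) \<partial>PX)"
    using sample.integral_fst'[OF int] by simp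
  also have "\<dots> = (\<integral>y. basis_kernel \<phi> pX m x y * complex_of_real (f y) \<partial>PX)"
  proof (rule integral_cong_AE)
    show "(\<lambda>y. \<integral>w. kernel_sample c pX \<phi> f m x (y, w) \<partial>PZT) \<in> borel_measurable PX"
      by (rule PZT.borel_measurable_lebesgue_integral) (use kernel_sample_measurable_sample_law[OF f] in simp)
    show "(\<lambda>y. basis_kernel \<phi> pX m x y * complex_of_real (f y)) \<in> borel_measurable PX"
      unfolding basis_kernel_def by measurable
    from AE_PX_in_domain show "AE y in PX. (\<integral>w. kernel_sample c pX \<phi> f m x (y, w) \<partial>PZT)
                            = basis_kernel \<phi> pX m x y * complex_of_real (f y)"
    proof eventually_elim
      case (elim y)
      have "\<bar>f y\<bar> + b \<le> c"
        using f_bound[OF elim] c_def by simp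
      then have "(\<integral>w. (if f y + fst w > snd w then 1 else -1 :: real) \<partial>PZT) = f y / c"
        by (rule integral_dithered_sign[OF pZ_prob pZ_sets pZ_supp pZ_mean c_pos])
      then show ?case
        using c_pos by (simp add: kernel_sample_def bit_def)
    qed
  qed
  also have "\<dots> = f_approx D \<phi> f m x"
    by (rule integral_density_basis_kernel[OF domain_sets domain_finite pX_meas pX_nonneg pX_out pX_pos
          basis_sq_int f])
  finally show ?thesis .
qed

lemma f_hat_deviation_prob:
  assumes n: "0 < n" and \<epsilon>: "0 \<le> \<epsilon>" and B: "0 \<le> B"
  shows "M.prob {\<omega> \<in> space M. \<epsilon> \<le> cmod (f_hat c pX \<phi> f X Z T n m x \<omega> - f_approx D \<phi> f m x)}
           \<le> 4 * exp (- (\<epsilon>\<^sup>2 * real n) / (8 * (c * B)\<^sup>2))"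
proof -
  let ?W = "\<lambda>i \<omega>. kernel_sample c pX \<phi> f m x (X i \<omega>, Z i \<omega>, T i \<omega>)"
  note [measurable] = kernel_sample_measurable[OF f]
  have "M.indep_vars (\<lambda>_. borel) ?W UNIV"
    by (rule M.indep_vars_compose2[OF indep]) measurable
  then have W_indep: "M.indep_vars (\<lambda>_. borel) ?W {..<n}"
    by (rule M.indep_vars_subset) simp
  have W_bound: "AE \<omega> in M. cmod (?W i \<omega>) \<le> c * B" for i
    using AE_kernel_sample_bound unfolding distrib[of i, symmetric]
    by (subst (asm) AE_distr_iff) simp_all
  have W_mean: "M.expectation (?W i) = f_approx D \<phi> f m x" for i
    using integral_distr[OF sample_measurable, of "kernel_sample c pX \<phi> f m x" i]
    by (simp add: distrib integral_kernel_sample)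
  show ?thesis
    using M.Hoeffding_complex_mean[OF W_indep W_bound W_mean n \<epsilon>] c_pos B
    by (simp add: f_hat_eq_sample_mean)
qed

end

lemma AE_f_hat_tendsto:
  fixes \<Lambda> :: "nat \<Rightarrow> real" and mn :: "nat \<Rightarrow> nat"
  assumes f: "f \<in> fun_class D a"
    and kernel_bound: "AE y in lborel. y \<in> D \<longrightarrow> (\<forall>m\<ge>1. cmod (basis_kernel \<phi> pX m x y) \<le> C * \<Lambda> m)"
    and C: "0 < C" and \<Lambda>_nonneg: "\<And>m. 1 \<le> m \<Longrightarrow> 0 \<le> \<Lambda> m" and mn_pos: "\<And>n. 1 \<le> n \<Longrightarrow> 1 \<le> mn n"
    and summable_tail: "\<And>\<epsilon>. 0 < \<epsilon> \<Longrightarrow>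
           summable (\<lambda>n. exp (- (\<epsilon>\<^sup>2 * real (Suc n)) / (\<Lambda> (mn (Suc n)))\<^sup>2))"
  shows "AE \<omega> in M. (\<lambda>n. f_hat c pX \<phi> f X Z T n (mn n) x \<omega> - f_approx D \<phi> f (mn n) x) \<longlonglongrightarrow> 0"
proof (rule M.AE_tendsto_zero_if_summable_tail_prob)
  show "(\<lambda>\<omega>. f_hat c pX \<phi> f X Z T n (mn n) x \<omega> - f_approx D \<phi> f (mn n) x) \<in> borel_measurable M" for n
    using kernel_sample_measurable[OF f] by (simp add: f_hat_eq_sample_mean)
  fix \<epsilon> :: real assume \<epsilon>: "0 < \<epsilon>"
  \<comment> \<open>\<open>\<delta>\<close> turns the Hoeffding exponent into the exponent of \<open>summable_tail\<close>.\<close>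
  define \<delta> where "\<delta> = \<epsilon> / (sqrt 8 * c * C)"
  have \<delta>: "0 < \<delta>" "\<epsilon>\<^sup>2 / (8 * (c * C)\<^sup>2) = \<delta>\<^sup>2"
    using \<epsilon> c_pos C by (simp_all add: \<delta>_def power_divide power_mult_distrib)
  have "M.prob {\<omega> \<in> space M. \<epsilon> \<le> cmod (f_hat c pX \<phi> f X Z T (Suc n) (mn (Suc n)) x \<omega>
                                               - f_approx D \<phi> f (mn (Suc n)) x)}
          \<le> 4 * exp (- (\<delta>\<^sup>2 * real (Suc n)) / (\<Lambda> (mn (Suc n)))\<^sup>2)" for n
  proof -
    have m: "1 \<le> mn (Suc n)"
      by (rule mn_pos) simp
    have "AE y in lborel. y \<in> D \<longrightarrow> cmod (basis_kernel \<phi> pX (mn (Suc n)) x y) \<le> C * \<Lambda> (mn (Suc n))"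
      using kernel_bound by eventually_elim (use m in auto)
    then have "M.prob {\<omega> \<in> space M. \<epsilon> \<le> cmod (f_hat c pX \<phi> f X Z T (Suc n) (mn (Suc n)) x \<omega>
                                                      - f_approx D \<phi> f (mn (Suc n)) x)}
                 \<le> 4 * exp (- (\<epsilon>\<^sup>2 * real (Suc n)) / (8 * (c * (C * \<Lambda> (mn (Suc n))))\<^sup>2))"
      by (rule f_hat_deviation_prob[OF f]) (use \<epsilon> C \<Lambda>_nonneg[OF m] in simp_all)
    also have "- (\<epsilon>\<^sup>2 * real (Suc n)) / (8 * (c * (C * \<Lambda> (mn (Suc n))))\<^sup>2)
             = - (\<delta>\<^sup>2 * real (Suc n)) / (\<Lambda> (mn (Suc n)))\<^sup>2"
      by (simp add: \<delta>(2)[symmetric] power_mult_distrib)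
    finally show ?thesis .
  qed
  then have "summable (\<lambda>n. M.prob {\<omega> \<in> space M. \<epsilon> \<le> cmod (f_hat c pX \<phi> f X Z T (Suc n) (mn (Suc n)) x \<omega>
                                                         - f_approx D \<phi> f (mn (Suc n)) x)})"
    by (intro summable_comparison_test'[OF summable_mult[OF summable_tail[OF \<delta>(1)]]]) simp
  then show "summable (\<lambda>n. M.prob {\<omega> \<in> space M. \<epsilon> \<le> norm (f_hat c pX \<phi> f X Z T n (mn n) x \<omega>
                                                        - f_approx D \<phi> f (mn n) x)})"
    by (subst (asm) summable_Suc_iff) simp
qed

end

theorem theorem2:
  fixes D :: "'a::euclidean_space set"
    and a b c \<nu> C1 C2 :: real
    and pX :: "'a \<Rightarrow> real"
    and pZ :: "real measure"
    and \<phi> :: "nat \<Rightarrow> 'a \<Rightarrow> complex"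
    and \<Lambda> :: "nat \<Rightarrow> real"
    and mn :: "nat \<Rightarrow> nat"
    and M :: "'w measure"
    and X :: "nat \<Rightarrow> 'w \<Rightarrow> 'a"
    and Z T :: "nat \<Rightarrow> 'w \<Rightarrow> real"
  assumes D_compact: "compact D"
    and ab: "0 < a" "0 < b"
    and c_def: "c = a + b"
    and pZ_prob: "prob_space pZ"
    and pZ_sets: "sets pZ = sets borel"
    and pZ_supp: "measure pZ {-b..b} = 1"
    and pZ_mean: "integral\<^sup>L pZ (\<lambda>z. z) = 0"
    and pX_meas: "pX \<in> borel_measurable borel"
    and pX_nonneg: "\<And>x. pX x \<ge> 0"
    and pX_out: "\<And>x. x \<notin> D \<Longrightarrow> pX x = 0"
    and pX_int: "(LINT x:D|lborel. pX x) = 1"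
    and pX_inf: "(INF x\<in>D. pX x) = \<nu>" "\<nu> > 0"
    and basis: "orthonormal_basis_L2 D \<phi>"
    and Lambda_nonneg: "\<And>m. m \<ge> 1 \<Longrightarrow> \<Lambda> m \<ge> 0"
    and Lambda_mono: "mono_on {1..} \<Lambda>"
    and mn_pos: "\<And>n. n \<ge> 1 \<Longrightarrow> mn n \<ge> 1"
    and mn_mono: "mono_on {1..} mn"
    and C_pos: "C1 > 0" "C2 > 0"
    and cond1: "AE xy in lborel. fst xy \<in> D \<and> snd xy \<in> D \<longrightarrow>
                  (\<forall>m\<ge>1. cmod (\<Sum>j<m. \<phi> j (fst xy) * cnj (\<phi> j (snd xy))
                                        / complex_of_real (pX (snd xy))) \<le> C1 * \<Lambda> m)"
    and cond2: "\<And>f. f \<in> fun_class D a \<Longrightarrow>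
                  AE x in lborel. x \<in> D \<longrightarrow>
                    (\<forall>m\<ge>1. cmod (f_approx D \<phi> f m x) \<le> C2 * \<Lambda> m)"
    and cond3: "\<And>\<epsilon>. \<epsilon> > 0 \<Longrightarrow>
                  summable (\<lambda>n. exp (- (\<epsilon>\<^sup>2 * real (Suc n)) / (\<Lambda> (mn (Suc n)))\<^sup>2))"
    and M_prob: "prob_space M"
    and indep: "prob_space.indep_vars M (\<lambda>_. borel) (\<lambda>i \<omega>. (X i \<omega>, Z i \<omega>, T i \<omega>)) UNIV"
    and distrib: "\<And>i. distr M borel (\<lambda>\<omega>. (X i \<omega>, Z i \<omega>, T i \<omega>)) =
                   density lborel (\<lambda>x. ennreal (pX x))
                     \<Otimes>\<^sub>M (pZ \<Otimes>\<^sub>M uniform_measure lborel {-c..c})"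
  shows "\<forall>f \<in> fun_class D a.
           AE x in lborel. x \<in> D \<longrightarrow>
             (AE \<omega> in M. (\<lambda>n. f_hat c pX \<phi> f X Z T n (mn n) x \<omega> - f_approx D \<phi> f (mn n) x)
                           \<longlonglongrightarrow> 0)"
proof (intro ballI)
  fix f assume f: "f \<in> fun_class D a"
  have pX_pos: "0 < pX y" if "y \<in> D" for y
  proof -
    have "bdd_below (pX ` D)"
      using pX_nonneg by (intro bdd_belowI[where m=0]) auto
    then show ?thesis
      using cINF_lower[OF _ that] pX_inf by fastforce
  qed
  have basis_sq_int: "sq_int_on D (\<phi> j)" for j
    using basis by (simp add: orthonormal_basis_L2_def)
  interpret dithered_sampling D a b c pX pZ \<phi> M X Z T
    by (rule dithered_sampling.intro)
       (fact D_compact ab c_def pZ_prob pZ_sets pZ_supp pZ_mean pX_meas pX_nonneg pX_out pX_int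
          pX_pos basis_sq_int M_prob indep distrib)+
  have "AE x in lborel. AE y in lborel. x \<in> D \<and> y \<in> D \<longrightarrow>
          (\<forall>m\<ge>1. cmod (basis_kernel \<phi> pX m x y) \<le> C1 * \<Lambda> m)"
    using AE_lborel_pair_iterated[OF cond1] by (simp add: basis_kernel_def)
  then show "AE x in lborel. x \<in> D \<longrightarrow>
      (AE \<omega> in M. (\<lambda>n. f_hat c pX \<phi> f X Z T n (mn n) x \<omega> - f_approx D \<phi> f (mn n) x) \<longlonglongrightarrow> 0)"
    by eventually_elim
       (auto intro!: AE_f_hat_tendsto[OF f _ C_pos(1) Lambda_nonneg mn_pos cond3] elim!: eventually_mono)
qed

end
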